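(* Let $\mathbf{A}\in\mathbb{R}^{m\times n}$ with $\|\mathbf{A}\|_\infty\le1$, $b\in\mathbb{R}^n$, $c\in\mathbb{R}^m$, $\mu>0$, $\epsilon\in[0,2]$ and $\tau>0$. Let $S_\tau=\{i\in[m]: c_i\ge\min_{i'\in[m]}c_{i'}+\tau\}$ and $\mathcal{X}'=\{x\in\Delta^m: x_i=0\text{ for all }i\in S_\tau\}$. Then $$\min_{x\in\mathcal{X}'}\max_{y\in[0,1]^n}f_{\mu,\epsilon}(x,y)\le\min_{x\in\Delta^m}\max_{y\in[0,1]^n}f_{\mu,\epsilon}(x,y)+\mu m\exp\Big(-\frac{\tau-3}{\mu}\Big).$$
   Context: $f_{\mu,\epsilon}(x,y)=x^\top\mathbf{A}y+c^\top x-b^\top y+\mu\sum_i x_i\log x_i-\frac\epsilon2 x^\top|\mathbf{A}|(y\circ y)$ on $\Delta^m\times[0,1]^n$, with $0\log0=0$; $|\mathbf{A}|$ is entrywise absolute value, $y\circ y$ entrywise square, $\|\mathbf{A}\|_\infty=\max_i\sum_j|\mathbf{A}_{ij}|$, $\Delta^m$ the probability simplex. *)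

theory Defs
  imports "HOL-Analysis.Analysis"
begin

text \<open>Indices: rows range over a finite type 'm (so m = CARD('m)), columns over 'n.\<close>

definition xlogx :: "real \<Rightarrow> real" where
  "xlogx t = (if t = 0 then 0 else t * ln t)"

definition prob_simplex :: "('m::finite \<Rightarrow> real) set" where
  "prob_simplex = {x. (\<forall>i. 0 \<le> x i) \<and> (\<Sum>i\<in>UNIV. x i) = 1}"

definition unit_cube :: "('n::finite \<Rightarrow> real) set" where
  "unit_cube = {y. \<forall>j. 0 \<le> y j \<and> y j \<le> 1}"

definition f_mu_eps ::
  "('m::finite \<Rightarrow> 'n::finite \<Rightarrow> real) \<Rightarrow> ('n \<Rightarrow> real) \<Rightarrow> ('m \<Rightarrow> real) \<Rightarrow> real \<Rightarrow> real
     \<Rightarrow> ('m \<Rightarrow> real) \<Rightarrow> ('n \<Rightarrow> real) \<Rightarrow> real" where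
  "f_mu_eps A b c \<mu> \<epsilon> x y =
     (\<Sum>i\<in>UNIV. \<Sum>j\<in>UNIV. x i * A i j * y j)
     + (\<Sum>i\<in>UNIV. c i * x i) - (\<Sum>j\<in>UNIV. b j * y j)
     + \<mu> * (\<Sum>i\<in>UNIV. xlogx (x i))
     - \<epsilon> / 2 * (\<Sum>i\<in>UNIV. \<Sum>j\<in>UNIV. x i * \<bar>A i j\<bar> * (y j)\<^sup>2)"

definition inf_norm :: "('m::finite \<Rightarrow> 'n::finite \<Rightarrow> real) \<Rightarrow> real" where
  "inf_norm A = Max (range (\<lambda>i. \<Sum>j\<in>UNIV. \<bar>A i j\<bar>))"

definition S_tau :: "('m::finite \<Rightarrow> real) \<Rightarrow> real \<Rightarrow> 'm set" where
  "S_tau c \<tau> = {i. c i \<ge> Min (range c) + \<tau>}"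

definition X_restr :: "('m::finite \<Rightarrow> real) \<Rightarrow> real \<Rightarrow> ('m \<Rightarrow> real) set" where
  "X_restr c \<tau> = {x \<in> prob_simplex. \<forall>i \<in> S_tau c \<tau>. x i = 0}"

end

theory Submission imports Defs begin

text \<open>Write \<open>f(x,y) = \<Sum>\<^sub>i x\<^sub>i g\<^sub>i(y) - b\<^sup>T y + \<mu> \<Sum>\<^sub>i x\<^sub>i log x\<^sub>i\<close>. Under \<open>\<parallel>A\<parallel>\<^sub>\<infinity> \<le> 1\<close> and
  \<open>\<epsilon> \<le> 2\<close> every row payoff satisfies \<open>c\<^sub>i - 2 \<le> g\<^sub>i(y) \<le> c\<^sub>i + 1\<close>, so moving all mass of
  \<open>x\<close> on \<open>S\<^sub>\<tau>\<close> to a minimiser \<open>k\<close> of \<open>c\<close> gains at least \<open>\<tau> - 3\<close> per unit of moved mass in the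
  linear part, uniformly in \<open>y\<close>. The entropy term loses at most \<open>x\<^sub>i - x\<^sub>i log x\<^sub>i\<close> per
  coordinate \<open>i \<in> S\<^sub>\<tau>\<close>, and \<open>t (1 - K) - t log t \<le> e\<^sup>-\<^sup>K\<close> bounds the net change per coordinate
  by \<open>\<mu> exp (-(\<tau> - 3)/\<mu>)\<close>.\<close>

definition row_payoff :: "('m::finite \<Rightarrow> 'n::finite \<Rightarrow> real) \<Rightarrow> ('m \<Rightarrow> real) \<Rightarrow> real \<Rightarrow> 'm \<Rightarrow> ('n \<Rightarrow> real) \<Rightarrow> real" where
  "row_payoff A c \<epsilon> i y = (\<Sum>j\<in>UNIV. A i j * y j) + c i - \<epsilon>/2 * (\<Sum>j\<in>UNIV. \<bar>A i j\<bar> * (y j)\<^sup>2)"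

lemma f_mu_eps_eq_row_payoff:
  "f_mu_eps A b c \<mu> \<epsilon> x y =
     (\<Sum>i\<in>UNIV. x i * row_payoff A c \<epsilon> i y) - (\<Sum>j\<in>UNIV. b j * y j) + \<mu> * (\<Sum>i\<in>UNIV. xlogx (x i))"
  by (simp add: f_mu_eps_def row_payoff_def algebra_simps sum.distrib sum_subtractf sum_distrib_left)

lemma xlogx_ge_minus_one:
  assumes "0 \<le> t" shows "-1 \<le> xlogx t"
proof (cases "t = 0")
  case False
  with assms have t: "t > 0" by simp
  have "- ln t \<le> 1/t - 1"
    using ln_le_minus_one[of "1/t"] t by (simp add: ln_div)
  then have "t * (- ln t) \<le> t * (1/t - 1)" using t by (intro mult_left_mono) auto
  then show ?thesis using t by (simp add: xlogx_def algebra_simps)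
qed (simp add: xlogx_def)

lemma xlogx_add_le:
  assumes "0 \<le> a" "0 \<le> d" "a + d \<le> 1"
  shows "xlogx (a + d) - xlogx a \<le> d"
proof (cases "a = 0")
  case True
  then show ?thesis using assms ln_le_minus_one[of d] by (cases "d = 0") (auto simp: xlogx_def)
next
  case False
  with assms have a: "a > 0" by simp
  define s where "s = a + d"
  have s: "s > 0" "s \<le> 1" using a assms by (auto simp: s_def)
  have "a * ln (s/a) \<le> a * (s/a - 1)"
    using ln_le_minus_one[of "s/a"] a s by (intro mult_left_mono) auto
  then have "a * (ln s - ln a) \<le> s - a" using a s by (simp add: ln_div algebra_simps)
  moreover have "d * ln s \<le> 0" using s assms by (simp add: mult_nonneg_nonpos)
  ultimately show ?thesis using a s by (simp add: xlogx_def s_def algebra_simps)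
qed

lemma linear_minus_xlogx_le_exp:
  assumes "0 \<le> t" shows "t * (1 - K) - xlogx t \<le> exp (- K)"
proof (cases "t = 0")
  case False
  with assms have t: "t > 0" by simp
  define u where "u = t * exp K"
  have u: "u > 0" using t by (simp add: u_def)
  have "- ln u \<le> 1/u - 1"
    using ln_le_minus_one[of "1/u"] u by (simp add: ln_div)
  then have "u * (- ln u) \<le> u * (1/u - 1)" using u by (intro mult_left_mono) auto
  then have h: "u * (1 - ln u) \<le> 1" using u by (simp add: algebra_simps)
  have "t * (1 - K) - xlogx t = exp (- K) * (u * (1 - ln u))"
    using t by (simp add: xlogx_def u_def ln_mult exp_minus field_simps)
  also have "\<dots> \<le> exp (- K)" using h by (simp add: mult_left_le)
  finally show ?thesis .
qed (simp add: xlogx_def)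

lemma row_abs_sum_le_inf_norm: "(\<Sum>j\<in>UNIV. \<bar>A i j\<bar>) \<le> inf_norm A"
  unfolding inf_norm_def by (rule Max_ge) auto

lemma abs_mult_unit_le: "0 \<le> t \<Longrightarrow> t \<le> 1 \<Longrightarrow> \<bar>a * t\<bar> \<le> \<bar>a\<bar>"
  for a t :: real
  by (simp add: abs_mult mult_left_le)

lemma row_payoff_le:
  assumes "y \<in> unit_cube" "0 \<le> \<epsilon>"
  shows "row_payoff A c \<epsilon> i y \<le> c i + (\<Sum>j\<in>UNIV. \<bar>A i j\<bar>)"
proof -
  have "(\<Sum>j\<in>UNIV. A i j * y j) \<le> (\<Sum>j\<in>UNIV. \<bar>A i j\<bar>)"
    using assms(1) abs_mult_unit_le[of "y _" "A i _"]
    by (intro sum_mono) (auto simp: unit_cube_def abs_le_iff)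
  moreover have "0 \<le> \<epsilon>/2 * (\<Sum>j\<in>UNIV. \<bar>A i j\<bar> * (y j)\<^sup>2)" using assms(2) by (simp add: sum_nonneg)
  ultimately show ?thesis by (simp add: row_payoff_def)
qed

lemma row_payoff_ge:
  assumes "y \<in> unit_cube" "0 \<le> \<epsilon>"
  shows "c i - (1 + \<epsilon>/2) * (\<Sum>j\<in>UNIV. \<bar>A i j\<bar>) \<le> row_payoff A c \<epsilon> i y"
proof -
  have y01: "0 \<le> y j" "y j \<le> 1" for j using assms(1) by (auto simp: unit_cube_def)
  have "- (\<Sum>j\<in>UNIV. \<bar>A i j\<bar>) \<le> (\<Sum>j\<in>UNIV. A i j * y j)"
    unfolding sum_negf[symmetric]
  proof (rule sum_mono)
    fix j show "- \<bar>A i j\<bar> \<le> A i j * y j"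
      using abs_mult_unit_le[OF y01(1)[of j] y01(2)[of j], of "A i j"] unfolding abs_le_iff by linarith
  qed
  moreover have "(\<Sum>j\<in>UNIV. \<bar>A i j\<bar> * (y j)\<^sup>2) \<le> (\<Sum>j\<in>UNIV. \<bar>A i j\<bar>)"
    using y01 by (intro sum_mono mult_left_le) (auto simp: power_le_one)
  then have "\<epsilon>/2 * (\<Sum>j\<in>UNIV. \<bar>A i j\<bar> * (y j)\<^sup>2) \<le> \<epsilon>/2 * (\<Sum>j\<in>UNIV. \<bar>A i j\<bar>)"
    using assms(2) by (intro mult_left_mono) auto
  ultimately show ?thesis by (simp add: row_payoff_def algebra_simps)
qed

lemma row_payoff_bounds:
  assumes "inf_norm A \<le> 1" "0 \<le> \<epsilon>" "\<epsilon> \<le> 2" "y \<in> unit_cube"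
  shows "c i - 2 \<le> row_payoff A c \<epsilon> i y" and "row_payoff A c \<epsilon> i y \<le> c i + 1"
proof -
  have r: "0 \<le> (\<Sum>j\<in>UNIV. \<bar>A i j\<bar>)" "(\<Sum>j\<in>UNIV. \<bar>A i j\<bar>) \<le> 1"
    using row_abs_sum_le_inf_norm[of A i] assms(1) by (auto simp: sum_nonneg)
  have "(1 + \<epsilon>/2) * (\<Sum>j\<in>UNIV. \<bar>A i j\<bar>) \<le> 2 * 1"
    using r assms(2,3) by (intro mult_mono) auto
  then show "c i - 2 \<le> row_payoff A c \<epsilon> i y" using row_payoff_ge[OF assms(4,2), of c i A] by linarith
  show "row_payoff A c \<epsilon> i y \<le> c i + 1" using row_payoff_le[OF assms(4,2), of A c i] r by linarith
qed

lemma row_payoff_gap_S_tau: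
  assumes "inf_norm A \<le> 1" "0 \<le> \<epsilon>" "\<epsilon> \<le> 2" "c k = Min (range c)"
    and "i \<in> S_tau c \<tau>" "y \<in> unit_cube"
  shows "row_payoff A c \<epsilon> k y \<le> row_payoff A c \<epsilon> i y - (\<tau> - 3)"
proof -
  have "row_payoff A c \<epsilon> k y \<le> c k + 1" "c i - 2 \<le> row_payoff A c \<epsilon> i y"
    using row_payoff_bounds[OF assms(1-3,6)] by auto
  moreover have "c k + \<tau> \<le> c i" using assms(4,5) by (simp add: S_tau_def)
  ultimately show ?thesis by linarith
qed

lemma bdd_above_f_mu_eps:
  fixes A :: "'m::finite \<Rightarrow> 'n::finite \<Rightarrow> real" and x :: "'m \<Rightarrow> real"
  assumes "x \<in> prob_simplex" "0 \<le> \<epsilon>"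
  shows "bdd_above (f_mu_eps A b c \<mu> \<epsilon> x ` unit_cube)"
proof (rule bdd_aboveI2)
  fix y :: "'n \<Rightarrow> real" assume y: "y \<in> unit_cube"
  have "(\<Sum>i\<in>UNIV. x i * row_payoff A c \<epsilon> i y) \<le> (\<Sum>i\<in>UNIV. x i * (c i + (\<Sum>j\<in>UNIV. \<bar>A i j\<bar>)))"
    using row_payoff_le[OF y assms(2)] assms(1)
    by (intro sum_mono mult_left_mono) (auto simp: prob_simplex_def)
  moreover have "- (\<Sum>j\<in>UNIV. b j * y j) \<le> (\<Sum>j\<in>UNIV. \<bar>b j\<bar>)"
    unfolding sum_negf[symmetric]
  proof (rule sum_mono)
    fix j have "0 \<le> y j" "y j \<le> 1" using y by (auto simp: unit_cube_def)
    then show "- (b j * y j) \<le> \<bar>b j\<bar>"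
      using abs_mult_unit_le[of "y j" "b j"] unfolding abs_le_iff by linarith
  qed
  ultimately show "f_mu_eps A b c \<mu> \<epsilon> x y \<le> (\<Sum>i\<in>UNIV. x i * (c i + (\<Sum>j\<in>UNIV. \<bar>A i j\<bar>)))
      + (\<Sum>j\<in>UNIV. \<bar>b j\<bar>) + \<mu> * (\<Sum>i\<in>UNIV. xlogx (x i))"
    by (simp add: f_mu_eps_eq_row_payoff)
qed

lemma SUP_f_mu_eps_ge:
  fixes A :: "'m::finite \<Rightarrow> 'n::finite \<Rightarrow> real" and x :: "'m \<Rightarrow> real"
  assumes "x \<in> prob_simplex" "0 \<le> \<epsilon>" "0 \<le> \<mu>"
  shows "Min (range c) - \<mu> * real CARD('m) \<le> (SUP y\<in>unit_cube. f_mu_eps A b c \<mu> \<epsilon> x y)"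
proof -
  have x0: "0 \<le> x i" for i using assms(1) by (auto simp: prob_simplex_def)
  have "Min (range c) = (\<Sum>i\<in>UNIV. x i * Min (range c))"
    using assms(1) by (simp add: prob_simplex_def flip: sum_distrib_right)
  also have "\<dots> \<le> (\<Sum>i\<in>UNIV. c i * x i)"
  proof (rule sum_mono)
    fix i have "Min (range c) \<le> c i" by (rule Min_le) auto
    then have "x i * Min (range c) \<le> x i * c i" using x0[of i] by (rule mult_left_mono)
    then show "x i * Min (range c) \<le> c i * x i" by (simp add: mult.commute)
  qed
  finally have lin: "Min (range c) \<le> (\<Sum>i\<in>UNIV. c i * x i)" .
  have "- real CARD('m) \<le> (\<Sum>i\<in>UNIV. xlogx (x i))"
    using sum_mono[of UNIV "\<lambda>_. -1" "\<lambda>i. xlogx (x i)"] x0 xlogx_ge_minus_one by simp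
  then have "\<mu> * (- real CARD('m)) \<le> \<mu> * (\<Sum>i\<in>UNIV. xlogx (x i))"
    using assms(3) by (rule mult_left_mono)
  with lin have "Min (range c) - \<mu> * real CARD('m) \<le> f_mu_eps A b c \<mu> \<epsilon> x (\<lambda>_. 0)"
    by (simp add: f_mu_eps_def)
  also have "\<dots> \<le> (SUP y\<in>unit_cube. f_mu_eps A b c \<mu> \<epsilon> x y)"
    by (rule cSUP_upper[OF _ bdd_above_f_mu_eps[OF assms(1,2)]]) (simp add: unit_cube_def)
  finally show ?thesis .
qed

definition concentrate :: "'m set \<Rightarrow> 'm \<Rightarrow> ('m \<Rightarrow> real) \<Rightarrow> 'm \<Rightarrow> real" where
  "concentrate S k x i = (if i \<in> S then 0 else if i = k then x k + sum x S else x i)"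

lemma concentrate_eq:
  assumes "k \<notin> S"
  shows "concentrate S k x i = x i - (if i \<in> S then x i else 0) + (if i = k then sum x S else 0)"
  using assms by (auto simp: concentrate_def)

lemma sum_concentrate_mult:
  fixes x h :: "'m::finite \<Rightarrow> real"
  assumes "k \<notin> S"
  shows "(\<Sum>i\<in>UNIV. concentrate S k x i * h i) = (\<Sum>i\<in>UNIV. x i * h i) + (\<Sum>i\<in>S. x i * (h k - h i))"
proof -
  have "concentrate S k x i * h i
          = x i * h i - (if i \<in> S then x i * h i else 0) + (if i = k then sum x S * h k else 0)" for i
    by (simp add: concentrate_eq[OF assms] algebra_simps)
  then have "(\<Sum>i\<in>UNIV. concentrate S k x i * h i)
      = (\<Sum>i\<in>UNIV. x i * h i) - (\<Sum>i\<in>S. x i * h i) + sum x S * h k"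
    by (simp add: sum.distrib sum_subtractf flip: sum.inter_restrict)
  then show ?thesis by (simp add: sum_distrib_left sum_subtractf algebra_simps)
qed

lemma concentrate_in_prob_simplex:
  assumes "x \<in> prob_simplex" "k \<notin> S"
  shows "concentrate S k x \<in> prob_simplex"
proof -
  have "0 \<le> sum x S" using assms(1) by (auto simp: prob_simplex_def intro: sum_nonneg)
  then have "0 \<le> concentrate S k x i" for i using assms(1) by (auto simp: prob_simplex_def concentrate_def)
  moreover have "(\<Sum>i\<in>UNIV. concentrate S k x i) = 1"
    using sum_concentrate_mult[OF assms(2), of x "\<lambda>_. 1"] assms(1) by (simp add: prob_simplex_def)
  ultimately show ?thesis by (simp add: prob_simplex_def)
qed

lemma concentrate_in_X_restr:
  assumes "x \<in> prob_simplex" "k \<notin> S_tau c \<tau>"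
  shows "concentrate (S_tau c \<tau>) k x \<in> X_restr c \<tau>"
  using concentrate_in_prob_simplex[OF assms] unfolding X_restr_def by (simp add: concentrate_def)

lemma sum_xlogx_concentrate_le:
  fixes x :: "'m::finite \<Rightarrow> real"
  assumes "x \<in> prob_simplex" "k \<notin> S"
  shows "(\<Sum>i\<in>UNIV. xlogx (concentrate S k x i))
           \<le> (\<Sum>i\<in>UNIV. xlogx (x i)) + (\<Sum>i\<in>S. x i - xlogx (x i))"
proof -
  have x0: "0 \<le> x i" for i using assms(1) by (auto simp: prob_simplex_def)
  have "x k + sum x S = sum x (insert k S)" using assms(2) by simp
  also have "\<dots> \<le> (\<Sum>i\<in>UNIV. x i)" using x0 by (intro sum_mono2) auto
  finally have le1: "x k + sum x S \<le> 1" using assms(1) by (simp add: prob_simplex_def)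
  have "xlogx (concentrate S k x i) = xlogx (x i) - (if i \<in> S then xlogx (x i) else 0)
          + (if i = k then xlogx (x k + sum x S) - xlogx (x k) else 0)" for i
    using assms(2) by (auto simp: concentrate_def xlogx_def)
  then have "(\<Sum>i\<in>UNIV. xlogx (concentrate S k x i))
      = (\<Sum>i\<in>UNIV. xlogx (x i)) - (\<Sum>i\<in>S. xlogx (x i)) + (xlogx (x k + sum x S) - xlogx (x k))"
    by (simp add: sum.distrib sum_subtractf flip: sum.inter_restrict)
  also have "\<dots> \<le> (\<Sum>i\<in>UNIV. xlogx (x i)) - (\<Sum>i\<in>S. xlogx (x i)) + sum x S"
    using xlogx_add_le[OF x0 sum_nonneg le1] x0 by simp
  finally show ?thesis by (simp add: sum_subtractf)
qed

lemma f_mu_eps_concentrate_le: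
  fixes x :: "'m::finite \<Rightarrow> real"
  assumes x: "x \<in> prob_simplex" and "k \<notin> S" "0 < \<mu>"
    and gap: "\<And>i. i \<in> S \<Longrightarrow> row_payoff A c \<epsilon> k y \<le> row_payoff A c \<epsilon> i y - \<delta>"
  shows "f_mu_eps A b c \<mu> \<epsilon> (concentrate S k x) y
           \<le> f_mu_eps A b c \<mu> \<epsilon> x y + \<mu> * real (card S) * exp (- \<delta> / \<mu>)"
proof -
  let ?g = "\<lambda>i. row_payoff A c \<epsilon> i y"
  have x0: "0 \<le> x i" for i using x by (auto simp: prob_simplex_def)
  have "(\<Sum>i\<in>S. x i * (?g k - ?g i)) \<le> (\<Sum>i\<in>S. x i * (- \<delta>))"
  proof (intro sum_mono mult_left_mono)
    fix i assume "i \<in> S"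
    then show "?g k - ?g i \<le> - \<delta>" using gap[of i] by linarith
  qed (use x0 in auto)
  then have lin: "(\<Sum>i\<in>UNIV. concentrate S k x i * ?g i)
                    \<le> (\<Sum>i\<in>UNIV. x i * ?g i) + (\<Sum>i\<in>S. x i * (- \<delta>))"
    by (simp add: sum_concentrate_mult[OF \<open>k \<notin> S\<close>])
  have ent: "\<mu> * (\<Sum>i\<in>UNIV. xlogx (concentrate S k x i))
               \<le> \<mu> * (\<Sum>i\<in>UNIV. xlogx (x i)) + (\<Sum>i\<in>S. \<mu> * (x i - xlogx (x i)))"
    using mult_left_mono[OF sum_xlogx_concentrate_le[OF x \<open>k \<notin> S\<close>], of \<mu>] \<open>0 < \<mu>\<close>
    by (simp add: distrib_left sum_distrib_left)
  have "f_mu_eps A b c \<mu> \<epsilon> (concentrate S k x) y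
      \<le> f_mu_eps A b c \<mu> \<epsilon> x y + ((\<Sum>i\<in>S. x i * (- \<delta>)) + (\<Sum>i\<in>S. \<mu> * (x i - xlogx (x i))))"
    unfolding f_mu_eps_eq_row_payoff using lin ent by linarith
  also have "(\<Sum>i\<in>S. x i * (- \<delta>)) + (\<Sum>i\<in>S. \<mu> * (x i - xlogx (x i)))
      = (\<Sum>i\<in>S. \<mu> * (x i * (1 - \<delta> / \<mu>) - xlogx (x i)))"
    unfolding sum.distrib[symmetric] using \<open>0 < \<mu>\<close> by (intro sum.cong) (auto simp: field_simps)
  also have "\<dots> \<le> (\<Sum>i\<in>S. \<mu> * exp (- (\<delta> / \<mu>)))"
  proof (rule sum_mono)
    fix i show "\<mu> * (x i * (1 - \<delta> / \<mu>) - xlogx (x i)) \<le> \<mu> * exp (- (\<delta> / \<mu>))"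
      using linear_minus_xlogx_le_exp[OF x0[of i], of "\<delta> / \<mu>"] \<open>0 < \<mu>\<close> by (simp add: mult_left_mono)
  qed
  finally show ?thesis by (simp add: mult.left_commute)
qed

lemma SUP_f_mu_eps_concentrate_le:
  fixes A :: "'m::finite \<Rightarrow> 'n::finite \<Rightarrow> real" and x :: "'m \<Rightarrow> real"
  assumes "x \<in> prob_simplex" "k \<notin> S" "0 < \<mu>" "0 \<le> \<epsilon>"
    and "\<And>i y. i \<in> S \<Longrightarrow> y \<in> unit_cube \<Longrightarrow> row_payoff A c \<epsilon> k y \<le> row_payoff A c \<epsilon> i y - \<delta>"
  shows "(SUP y\<in>unit_cube. f_mu_eps A b c \<mu> \<epsilon> (concentrate S k x) y)
           \<le> (SUP y\<in>unit_cube. f_mu_eps A b c \<mu> \<epsilon> x y) + \<mu> * real (card S) * exp (- \<delta> / \<mu>)"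
proof (rule cSUP_least)
  show "(unit_cube :: ('n::finite \<Rightarrow> real) set) \<noteq> {}" by (auto simp: unit_cube_def)
  fix y :: "'n \<Rightarrow> real" assume y: "y \<in> unit_cube"
  have "f_mu_eps A b c \<mu> \<epsilon> x y \<le> (SUP y\<in>unit_cube. f_mu_eps A b c \<mu> \<epsilon> x y)"
    by (rule cSUP_upper[OF y bdd_above_f_mu_eps[OF assms(1,4)]])
  then show "f_mu_eps A b c \<mu> \<epsilon> (concentrate S k x) y
      \<le> (SUP y\<in>unit_cube. f_mu_eps A b c \<mu> \<epsilon> x y) + \<mu> * real (card S) * exp (- \<delta> / \<mu>)"
    using f_mu_eps_concentrate_le[OF assms(1-3) assms(5)[OF _ y], of b] by linarith
qed

lemma INF_le_INF_add_of_approx: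
  fixes \<phi> :: "'a \<Rightarrow> real"
  assumes "Q \<noteq> {}" "bdd_below (\<phi> ` P)"
    and "\<And>x. x \<in> Q \<Longrightarrow> \<exists>x'\<in>P. \<phi> x' \<le> \<phi> x + E"
  shows "(INF x\<in>P. \<phi> x) \<le> (INF x\<in>Q. \<phi> x) + E"
proof -
  have "(INF x\<in>P. \<phi> x) - E \<le> (INF x\<in>Q. \<phi> x)"
  proof (rule cINF_greatest[OF assms(1)])
    fix x assume "x \<in> Q"
    then obtain x' where "x' \<in> P" "\<phi> x' \<le> \<phi> x + E" using assms(3) by blast
    then show "(INF x\<in>P. \<phi> x) - E \<le> \<phi> x" using cINF_lower[OF assms(2), of x'] by linarith
  qed
  then show ?thesis by simp
qed

theorem mainTheorem8:
  fixes A :: "'m::finite \<Rightarrow> 'n::finite \<Rightarrow> real" and b :: "'n \<Rightarrow> real" and c :: "'m \<Rightarrow> real"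
    and \<mu> \<epsilon> \<tau> :: real
  assumes "inf_norm A \<le> 1" and "\<mu> > 0" and "0 \<le> \<epsilon>" and "\<epsilon> \<le> 2" and "\<tau> > 0"
  shows "(INF x\<in>X_restr c \<tau>. SUP y\<in>unit_cube. f_mu_eps A b c \<mu> \<epsilon> x y)
         \<le> (INF x\<in>prob_simplex. SUP y\<in>unit_cube. f_mu_eps A b c \<mu> \<epsilon> x y)
            + \<mu> * real CARD('m) * exp (- (\<tau> - 3) / \<mu>)"
proof (rule INF_le_INF_add_of_approx)
  let ?\<phi> = "\<lambda>x. SUP y\<in>unit_cube. f_mu_eps A b c \<mu> \<epsilon> x y" and ?S = "S_tau c \<tau>"
  have "Min (range c) \<in> range c" by (rule Min_in) auto
  then obtain k where k: "c k = Min (range c)" by (metis imageE)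
  have "k \<notin> ?S" using k \<open>\<tau> > 0\<close> by (simp add: S_tau_def)
  show "(prob_simplex :: ('m \<Rightarrow> real) set) \<noteq> {}"
    by (auto simp: prob_simplex_def intro!: exI[of _ "\<lambda>i. if i = k then 1 else 0"])
  show "bdd_below (?\<phi> ` X_restr c \<tau>)"
    using SUP_f_mu_eps_ge[of _ \<epsilon> \<mu> c A b] assms(2,3)
    by (intro bdd_belowI2[of _ "Min (range c) - \<mu> * real CARD('m)"]) (auto simp: X_restr_def)
  fix x :: "'m \<Rightarrow> real" assume x: "x \<in> prob_simplex"
  have "?\<phi> (concentrate ?S k x) \<le> ?\<phi> x + \<mu> * real (card ?S) * exp (- (\<tau> - 3) / \<mu>)"
    using SUP_f_mu_eps_concentrate_le[OF x \<open>k \<notin> ?S\<close> assms(2,3)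
        row_payoff_gap_S_tau[OF assms(1,3,4) k]] .
  also have "\<dots> \<le> ?\<phi> x + \<mu> * real CARD('m) * exp (- (\<tau> - 3) / \<mu>)"
    using assms(2) by (simp add: card_mono)
  finally have "?\<phi> (concentrate ?S k x) \<le> ?\<phi> x + \<mu> * real CARD('m) * exp (- (\<tau> - 3) / \<mu>)" .
  with concentrate_in_X_restr[OF x \<open>k \<notin> ?S\<close>]
  show "\<exists>x'\<in>X_restr c \<tau>. ?\<phi> x' \<le> ?\<phi> x + \<mu> * real CARD('m) * exp (- (\<tau> - 3) / \<mu>)"
    by blast
qed

end
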